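(* Let ${\cal G}^{+a}_{Global}$ denote the class of scheduling games on identical machines of speed $1$ with a global priority list in which every job $i$ has processing-time function $p_i(t)=b_i+at$ with $b_i\ge0$ and a common rate $a>0$. For every integer $m\ge2$ and every real $a>0$ there exists a constant $c=c(m,a)>0$ such that for every integer $n\ge 2m+1$ there is a game in ${\cal G}^{+a}_{Global}$ with $m$ machines and $n$ jobs whose price of anarchy is at least $c\,(1+a)^{n/m}$. That is, $PoA({\cal G}^{+a}_{Global})=\Omega((1+a)^{n/m})$.
   Context: Scheduling game: a finite set $N$ of $n$ jobs (players) and a set $M$ of $m$ machines; machine $j$ has speed $s_j>0$. With a global priority list, all machines share the same bijection $\pi:N\to\{1,\dots,n\}$, and job $u$ has higher priority than $v$ iff $\pi(u)<\pi(v)$. A profile $\sigma\in M^N$ assigns each job to a machine. On machine $j$, the jobs assigned to it, listed in increasing $\pi$-order as $i_1,i_2,\dots$, are processed without idle time: $S_{i_1}(\sigma)=0$, $C_{i_k}(\sigma)=S_{i_k}(\sigma)+p_{i_k}(S_{i_k}(\sigma))/s_j$, $S_{i_{k+1}}(\sigma)=C_{i_k}(\sigma)$. The cost of job $i$ is $C_i(\sigma)$. A pure Nash equilibrium (NE) is a profile in which no job can strictly decrease its completion time by unilaterally changing its machine. Makespan $C_{\max}(\sigma)=\max_iC_i(\sigma)$; $OPT(G)=\min_\sigma C_{\max}(\sigma)$. $PoA(G)=\max_{\sigma\text{ NE}}C_{\max}(\sigma)/OPT(G)$. *)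

theory Defs
  imports Main Complex_Main
begin

text \<open>Jobs are 0..<n, machines are 0..<m, s j is the speed of machine j,
  p i is the (start-time dependent) processing-time function of job i,
  pr is the global priority (smaller value = higher priority),
  a profile sig maps each job to a machine.\<close>

definition profile :: "nat \<Rightarrow> nat \<Rightarrow> (nat \<Rightarrow> nat) \<Rightarrow> bool" where
  "profile m n sig \<longleftrightarrow> (\<forall>i<n. sig i < m)"

definition compl :: "nat \<Rightarrow> (nat \<Rightarrow> real) \<Rightarrow> (nat \<Rightarrow> real \<Rightarrow> real) \<Rightarrow> (nat \<Rightarrow> nat)
    \<Rightarrow> (nat \<Rightarrow> nat) \<Rightarrow> nat \<Rightarrow> real" where
  "compl n s p pr sig i =
     foldl (\<lambda>t u. t + p u t / s (sig i)) 0
       (filter (\<lambda>u. sig u = sig i \<and> pr u \<le> pr i) (sort_key pr [0..<n]))"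

definition is_NE :: "nat \<Rightarrow> nat \<Rightarrow> (nat \<Rightarrow> real) \<Rightarrow> (nat \<Rightarrow> real \<Rightarrow> real) \<Rightarrow> (nat \<Rightarrow> nat)
    \<Rightarrow> (nat \<Rightarrow> nat) \<Rightarrow> bool" where
  "is_NE m n s p pr sig \<longleftrightarrow> profile m n sig \<and>
     (\<forall>i<n. \<forall>j<m. compl n s p pr sig i \<le> compl n s p pr (sig(i := j)) i)"

definition makespan :: "nat \<Rightarrow> (nat \<Rightarrow> real) \<Rightarrow> (nat \<Rightarrow> real \<Rightarrow> real) \<Rightarrow> (nat \<Rightarrow> nat)
    \<Rightarrow> (nat \<Rightarrow> nat) \<Rightarrow> real" where
  "makespan n s p pr sig = Max ((\<lambda>i. compl n s p pr sig i) ` {..<n})"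

definition OPT :: "nat \<Rightarrow> nat \<Rightarrow> (nat \<Rightarrow> real) \<Rightarrow> (nat \<Rightarrow> real \<Rightarrow> real) \<Rightarrow> (nat \<Rightarrow> nat) \<Rightarrow> real" where
  "OPT m n s p pr = Inf {makespan n s p pr sig | sig. profile m n sig}"

definition PoA :: "nat \<Rightarrow> nat \<Rightarrow> (nat \<Rightarrow> real) \<Rightarrow> (nat \<Rightarrow> real \<Rightarrow> real) \<Rightarrow> (nat \<Rightarrow> nat) \<Rightarrow> real" where
  "PoA m n s p pr = Sup {makespan n s p pr sig / OPT m n s p pr | sig. is_NE m n s p pr sig}"

end

theory Submission
  imports Defs "HOL-Library.FuncSet"
begin

(* Jobs 0, ..., m-1 get base time 1 and all later jobs base time 0; priority is the index.
   In the round-robin profile i |-> i mod m each machine starts with one unit job, and every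
   later job on it multiplies the current completion time by 1 + a.  Job i has i div m
   predecessors on its own machine and at least as many on any other one, so round robin is
   an equilibrium, and its last job finishes at (1 + a)^((n - 1) div m).  Putting all unit
   jobs on one machine and all zero jobs on another (where they finish at time 0) gives
   makespan at most (2 + a)^m, a bound independent of n. *)

lemma compl_cong:
  assumes "\<forall>u<n. sig' u = sig u" "i < n"
  shows "compl n s p pr sig' i = compl n s p pr sig i"
proof -
  have "filter (\<lambda>u. sig' u = sig' i \<and> pr u \<le> pr i) (sort_key pr [0..<n])
      = filter (\<lambda>u. sig u = sig i \<and> pr u \<le> pr i) (sort_key pr [0..<n])"
    by (rule filter_cong) (use assms in auto)
  then show ?thesis
    unfolding compl_def using assms by simp
qed

lemma makespan_cong:
  assumes "\<forall>u<n. sig' u = sig u"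
  shows "makespan n s p pr sig' = makespan n s p pr sig"
  unfolding makespan_def using compl_cong[OF assms] by (metis image_cong lessThan_iff)

lemma compl_le_makespan: "i < n \<Longrightarrow> compl n s p pr sig i \<le> makespan n s p pr sig"
  unfolding makespan_def by (intro Max_ge) auto

lemma makespan_le:
  assumes "0 < n" "\<And>i. i < n \<Longrightarrow> compl n s p pr sig i \<le> x"
  shows "makespan n s p pr sig \<le> x"
  unfolding makespan_def using assms by (intro Max.boundedI) auto

lemma finite_makespans: "finite {makespan n s p pr sig | sig. profile m n sig}"
proof (rule finite_subset)
  show "{makespan n s p pr sig | sig. profile m n sig}
      \<subseteq> makespan n s p pr ` (\<Pi>\<^sub>E u\<in>{..<n}. {..<m})"
  proof clarify
    fix sig assume "profile m n sig"
    then have "restrict sig {..<n} \<in> (\<Pi>\<^sub>E u\<in>{..<n}. {..<m})"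
      by (auto simp: profile_def)
    moreover have "makespan n s p pr sig = makespan n s p pr (restrict sig {..<n})"
      by (rule makespan_cong) simp
    ultimately show "makespan n s p pr sig \<in> makespan n s p pr ` (\<Pi>\<^sub>E u\<in>{..<n}. {..<m})"
      by blast
  qed
qed (intro finite_imageI finite_PiE; simp)

lemma OPT_le_makespan:
  assumes "profile m n sig"
  shows "OPT m n s p pr \<le> makespan n s p pr sig"
  unfolding OPT_def using assms by (intro cInf_lower bdd_below_finite finite_makespans) auto

lemma OPT_greatest:
  assumes "0 < m" "\<And>sig. profile m n sig \<Longrightarrow> x \<le> makespan n s p pr sig"
  shows "x \<le> OPT m n s p pr"
  unfolding OPT_def
proof (rule cInf_greatest)
  have "profile m n (\<lambda>_. 0)"
    using assms(1) by (simp add: profile_def)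
  then show "{makespan n s p pr sig | sig. profile m n sig} \<noteq> {}"
    by blast
qed (use assms(2) in blast)

lemma makespan_div_OPT_le_PoA:
  assumes "is_NE m n s p pr sig"
  shows "makespan n s p pr sig / OPT m n s p pr \<le> PoA m n s p pr"
proof -
  let ?ratios = "{makespan n s p pr sig / OPT m n s p pr | sig. is_NE m n s p pr sig}"
  have "?ratios \<subseteq> (\<lambda>x. x / OPT m n s p pr) ` {makespan n s p pr sig | sig. profile m n sig}"
    by (auto simp: is_NE_def)
  then have "finite ?ratios"
    using finite_makespans by (rule finite_subset[OF _ finite_imageI])
  then show ?thesis
    unfolding PoA_def using assms by (intro cSup_upper bdd_above_finite) auto
qed

definition finish_time :: "(nat \<Rightarrow> real \<Rightarrow> real) \<Rightarrow> real \<Rightarrow> nat list \<Rightarrow> real" where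
  "finish_time p t xs = foldl (\<lambda>t u. t + p u t) t xs"

lemma finish_time_Nil [simp]: "finish_time p t [] = t"
  by (simp add: finish_time_def)

lemma finish_time_Cons [simp]: "finish_time p t (u # xs) = finish_time p (t + p u t) xs"
  by (simp add: finish_time_def)

lemma finish_time_snoc:
  "finish_time p t (xs @ [u]) = finish_time p t xs + p u (finish_time p t xs)"
  by (simp add: finish_time_def)

(* Under the identity priority these are the jobs processed before job i on machine j. *)
definition jobs_before :: "(nat \<Rightarrow> nat) \<Rightarrow> nat \<Rightarrow> nat \<Rightarrow> nat list" where
  "jobs_before sig j i = filter (\<lambda>u. sig u = j) [0..<i]"

lemma jobs_before_fun_upd [simp]: "jobs_before (sig(i := j)) k i = jobs_before sig k i"
  unfolding jobs_before_def by (rule filter_cong) auto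

lemma compl_unit_speed_id_priority:
  assumes "i < n"
  shows "compl n (\<lambda>_. 1) p id sig i = finish_time p 0 (jobs_before sig (sig i) i @ [i])"
proof -
  have "[0..<n] = [0..<i] @ i # [Suc i..<n]"
    using assms upt_add_eq_append[of 0 i "n - i"] upt_conv_Cons[of i n] by simp
  then have "filter (\<lambda>u. sig u = sig i \<and> u \<le> i) [0..<n] = jobs_before sig (sig i) i @ [i]"
    unfolding jobs_before_def by (auto intro: filter_cong simp: filter_empty_conv)
  moreover have "sort_key id [0..<n] = [0..<n]"
    unfolding id_def using sorted_sort_id[of "[0..<n]"] by simp
  ultimately show ?thesis
    by (simp add: compl_def finish_time_def)
qed

lemma is_NE_unit_speed_id_priority:
  assumes "profile m n sig"
    and step_mono: "\<And>u. mono (\<lambda>t. t + p u t)"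
    and least_load: "\<And>i j. i < n \<Longrightarrow> j < m \<Longrightarrow>
      finish_time p 0 (jobs_before sig (sig i) i) \<le> finish_time p 0 (jobs_before sig j i)"
  shows "is_NE m n (\<lambda>_. 1) p id sig"
  unfolding is_NE_def
proof (intro conjI allI impI)
  fix i j assume "i < n" "j < m"
  have "finish_time p 0 (jobs_before sig (sig i) i) + p i (finish_time p 0 (jobs_before sig (sig i) i))
      \<le> finish_time p 0 (jobs_before sig j i) + p i (finish_time p 0 (jobs_before sig j i))"
    using monoD[OF step_mono least_load[OF \<open>i < n\<close> \<open>j < m\<close>]] by simp
  then show "compl n (\<lambda>_. 1) p id sig i \<le> compl n (\<lambda>_. 1) p id (sig(i := j)) i"
    using \<open>i < n\<close> by (simp add: compl_unit_speed_id_priority finish_time_snoc)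
qed (fact assms(1))

lemma finish_time_affine_zero_base:
  assumes "\<forall>u\<in>set xs. b u = 0"
  shows "finish_time (\<lambda>u t. b u + a * t) t xs = (1 + a) ^ length xs * t"
  using assms by (induction xs arbitrary: t) (auto simp: algebra_simps)

lemma finish_time_affine_le:
  assumes "0 \<le> a" "0 \<le> t" "\<forall>u\<in>set xs. 0 \<le> b u \<and> b u \<le> 1"
  shows "finish_time (\<lambda>u t. b u + a * t) t xs + 1 \<le> (t + 1) * (2 + a) ^ length xs"
  using assms(2,3)
proof (induction xs arbitrary: t)
  case (Cons u xs)
  let ?t' = "t + (b u + a * t)"
  have "0 \<le> a * t"
    using assms(1) Cons.prems(1) by simp
  then have "0 \<le> ?t'" and step: "?t' + 1 \<le> (t + 1) * (2 + a)"
    using Cons.prems assms(1) by (auto simp: algebra_simps)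
  then have "finish_time (\<lambda>u t. b u + a * t) ?t' xs + 1 \<le> (?t' + 1) * (2 + a) ^ length xs"
    using Cons by simp
  also have "\<dots> \<le> (t + 1) * (2 + a) * (2 + a) ^ length xs"
    using step assms(1) by (intro mult_right_mono) auto
  finally show ?case
    by (simp add: algebra_simps)
qed simp

lemma progression_subset_residue_class:
  fixes m i :: nat
  assumes "j < m"
  shows "(\<lambda>q. j + m * q) ` {..<i div m} \<subseteq> {u. u < i \<and> u mod m = j}"
proof clarify
  fix q assume "q < i div m"
  then have "m * Suc q \<le> m * (i div m)"
    by (intro mult_le_mono2) simp
  also have "\<dots> \<le> i"
    by simp
  finally have "m + m * q \<le> i"
    by simp
  then show "j + m * q < i \<and> (j + m * q) mod m = j"
    using assms by simp
qed

lemma own_residue_class_subset_progression: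
  fixes m i :: nat
  shows "{u. u < i \<and> u mod m = i mod m} \<subseteq> (\<lambda>q. i mod m + m * q) ` {..<i div m}"
proof clarify
  fix u assume "u < i" "u mod m = i mod m"
  then have u: "u = i mod m + m * (u div m)"
    by (metis add.commute div_mult_mod_eq mult.commute)
  have "u div m \<le> i div m"
    using \<open>u < i\<close> by (simp add: div_le_mono)
  moreover have "u div m \<noteq> i div m"
    using \<open>u < i\<close> \<open>u mod m = i mod m\<close> by (metis div_mult_mod_eq less_irrefl)
  ultimately have "u div m < i div m"
    by simp
  then show "u \<in> (\<lambda>q. i mod m + m * q) ` {..<i div m}"
    using u by blast
qed

lemma card_residue_class_ge:
  fixes m i :: nat
  assumes "j < m"
  shows "i div m \<le> card {u. u < i \<and> u mod m = j}"
proof -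
  have "inj_on (\<lambda>q. j + m * q) {..<i div m}"
    using assms by (auto simp: inj_on_def)
  then have "card ((\<lambda>q. j + m * q) ` {..<i div m}) = i div m"
    by (simp add: card_image)
  then show ?thesis
    using card_mono[OF _ progression_subset_residue_class[where i = i, OF assms]] by fastforce
qed

lemma card_own_residue_class:
  fixes m i :: nat
  assumes "0 < m"
  shows "card {u. u < i \<and> u mod m = i mod m} = i div m"
proof -
  have "card {u. u < i \<and> u mod m = i mod m} \<le> card ((\<lambda>q. i mod m + m * q) ` {..<i div m})"
    by (rule card_mono[OF _ own_residue_class_subset_progression]) simp
  also have "\<dots> \<le> i div m"
    using card_image_le[of "{..<i div m}"] by simp
  finally have "card {u. u < i \<and> u mod m = i mod m} \<le> i div m" .
  then show ?thesis
    using card_residue_class_ge[of "i mod m" m i] assms by simp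
qed

definition first_round_base :: "nat \<Rightarrow> nat \<Rightarrow> real" where
  "first_round_base m i = (if i < m then 1 else 0)"

lemma jobs_before_round_robin:
  assumes "j < m"
  shows "jobs_before (\<lambda>u. u mod m) j i = (if j < i then j # filter (\<lambda>u. u mod m = j) [Suc j..<i] else [])"
proof (cases "j < i")
  case True
  have "[0..<i] = [0..<j] @ j # [Suc j..<i]"
    using True upt_add_eq_append[of 0 j "i - j"] upt_conv_Cons[of j i] by simp
  moreover have "filter (\<lambda>u. u mod m = j) [0..<j] = []"
    using assms by (auto simp: filter_empty_conv)
  ultimately show ?thesis
    using True assms by (simp add: jobs_before_def)
next
  case False
  then show ?thesis
    using assms by (auto simp: jobs_before_def filter_empty_conv)
qed

lemma length_jobs_before_round_robin:
  "length (jobs_before (\<lambda>u. u mod m) j i) = card {u. u < i \<and> u mod m = j}"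
  unfolding jobs_before_def length_filter_conv_card by (rule arg_cong[where f = card]) auto

lemma round_robin_load:
  assumes "j < m"
  shows "finish_time (\<lambda>u t. first_round_base m u + a * t) 0 (jobs_before (\<lambda>u. u mod m) j i) =
    (if j < i then (1 + a) ^ (card {u. u < i \<and> u mod m = j} - 1) else 0)"
proof (cases "j < i")
  case True
  let ?later = "filter (\<lambda>u. u mod m = j) [Suc j..<i]"
  have "\<forall>u\<in>set ?later. first_round_base m u = 0"
    by (auto simp: first_round_base_def)
  then have "finish_time (\<lambda>u t. first_round_base m u + a * t) 1 ?later = (1 + a) ^ length ?later"
    by (simp add: finish_time_affine_zero_base)
  moreover have "length ?later = card {u. u < i \<and> u mod m = j} - 1"
    using length_jobs_before_round_robin[of m j i] jobs_before_round_robin[OF assms, of i] True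
    by simp
  ultimately show ?thesis
    using jobs_before_round_robin[OF assms, of i] True assms by (simp add: first_round_base_def)
next
  case False
  then show ?thesis
    using jobs_before_round_robin[OF assms, of i] by simp
qed

lemma round_robin_is_NE:
  assumes "0 < m" "0 \<le> a"
  shows "is_NE m n (\<lambda>_. 1) (\<lambda>u t. first_round_base m u + a * t) id (\<lambda>u. u mod m)"
proof (rule is_NE_unit_speed_id_priority)
  show "profile m n (\<lambda>u. u mod m)"
    using assms(1) by (simp add: profile_def)
  show "mono (\<lambda>t. t + (first_round_base m u + a * t))" for u
    using assms(2) by (intro monoI) (simp add: mult_left_mono add_mono)
next
  fix i j assume "j < m"
  let ?load = "\<lambda>k. finish_time (\<lambda>u t. first_round_base m u + a * t) 0 (jobs_before (\<lambda>u. u mod m) k i)"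
  show "?load (i mod m) \<le> ?load j"
  proof (cases "i < m")
    case True
    then show ?thesis
      using round_robin_load[OF \<open>j < m\<close>, of a i] round_robin_load[of "i mod m" m a i] assms
      by simp
  next
    case False
    then have "i mod m < i" "j < i"
      using \<open>j < m\<close> mod_less_divisor[OF assms(1), of i] by linarith+
    have "card {u. u < i \<and> u mod m = i mod m} \<le> card {u. u < i \<and> u mod m = j}"
      using card_own_residue_class[OF assms(1)] card_residue_class_ge[OF \<open>j < m\<close>] by simp
    then have "(1 + a) ^ (card {u. u < i \<and> u mod m = i mod m} - 1)
        \<le> (1 + a) ^ (card {u. u < i \<and> u mod m = j} - 1)"
      using assms(2) by (intro power_increasing) auto
    then show ?thesis
      using round_robin_load[OF \<open>j < m\<close>, of a i] round_robin_load[of "i mod m" m a i] assms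
        \<open>i mod m < i\<close> \<open>j < i\<close> by simp
  qed
qed

lemma round_robin_compl_last:
  assumes "0 < m" "m < n"
  shows "compl n (\<lambda>_. 1) (\<lambda>u t. first_round_base m u + a * t) id (\<lambda>u. u mod m) (n - 1)
    = (1 + a) ^ ((n - 1) div m)"
proof -
  let ?i = "n - 1"
  have "0 < ?i div m"
    using assms by (simp add: div_greater_zero_iff)
  moreover have "?i mod m < ?i"
    using assms mod_less_divisor[of m ?i] by linarith
  moreover have "first_round_base m ?i = 0"
    using assms by (simp add: first_round_base_def)
  ultimately show ?thesis
    using assms round_robin_load[of "?i mod m" m a ?i] card_own_residue_class[OF assms(1), of ?i]
    by (simp add: compl_unit_speed_id_priority finish_time_snoc algebra_simps power_eq_if)
qed

lemma first_round_OPT_ge_1: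
  assumes "0 < m" "0 < n"
  shows "1 \<le> OPT m n (\<lambda>_. 1) (\<lambda>u t. first_round_base m u + a * t) id"
proof (rule OPT_greatest[OF assms(1)])
  fix sig
  have "compl n (\<lambda>_. 1) (\<lambda>u t. first_round_base m u + a * t) id sig 0 = 1"
    using assms by (simp add: compl_unit_speed_id_priority jobs_before_def first_round_base_def)
  moreover have "compl n (\<lambda>_. 1) (\<lambda>u t. first_round_base m u + a * t) id sig 0
      \<le> makespan n (\<lambda>_. 1) (\<lambda>u t. first_round_base m u + a * t) id sig"
    by (rule compl_le_makespan[OF assms(2)])
  ultimately show "1 \<le> makespan n (\<lambda>_. 1) (\<lambda>u t. first_round_base m u + a * t) id sig"
    by simp
qed

lemma first_round_OPT_le:
  assumes "2 \<le> m" "0 < n" "0 \<le> a"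
  shows "OPT m n (\<lambda>_. 1) (\<lambda>u t. first_round_base m u + a * t) id \<le> (2 + a) ^ m"
proof -
  let ?p = "\<lambda>u t. first_round_base m u + a * t"
  let ?split = "\<lambda>u. if u < m then 0 else 1 :: nat"
  have "compl n (\<lambda>_. 1) ?p id ?split i \<le> (2 + a) ^ m" if "i < n" for i
  proof (cases "i < m")
    case True
    then have "jobs_before ?split (?split i) i @ [i] = [0..<Suc i]"
      by (auto simp: jobs_before_def intro: filter_True)
    moreover have "finish_time ?p 0 [0..<Suc i] + 1 \<le> (2 + a) ^ Suc i"
      using finish_time_affine_le[OF assms(3), of 0 "[0..<Suc i]"] by (simp add: first_round_base_def)
    moreover have "(2 + a) ^ Suc i \<le> (2 + a) ^ m"
      using True assms(3) by (intro power_increasing) auto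
    ultimately show ?thesis
      using \<open>i < n\<close> by (simp add: compl_unit_speed_id_priority)
  next
    case False
    then have "\<forall>u\<in>set (jobs_before ?split (?split i) i @ [i]). first_round_base m u = 0"
      by (auto simp: jobs_before_def first_round_base_def)
    then show ?thesis
      using \<open>i < n\<close> assms(3) by (simp add: compl_unit_speed_id_priority finish_time_affine_zero_base)
  qed
  then have "makespan n (\<lambda>_. 1) ?p id ?split \<le> (2 + a) ^ m"
    using makespan_le[OF assms(2)] by blast
  moreover have "profile m n ?split"
    using assms(1) by (simp add: profile_def)
  ultimately show ?thesis
    using OPT_le_makespan order_trans by blast
qed

lemma first_round_PoA_ge:
  assumes "2 \<le> m" "m < n" "0 \<le> a"
  shows "(1 + a) ^ ((n - 1) div m) / (2 + a) ^ m
    \<le> PoA m n (\<lambda>_. 1) (\<lambda>u t. first_round_base m u + a * t) id"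
proof -
  let ?p = "\<lambda>u t. first_round_base m u + a * t"
  let ?round_robin = "\<lambda>u. u mod m"
  have "compl n (\<lambda>_. 1) ?p id ?round_robin (n - 1) \<le> makespan n (\<lambda>_. 1) ?p id ?round_robin"
    using assms by (intro compl_le_makespan) simp
  then have "(1 + a) ^ ((n - 1) div m) \<le> makespan n (\<lambda>_. 1) ?p id ?round_robin"
    using round_robin_compl_last[of m n a] assms by simp
  moreover have "1 \<le> OPT m n (\<lambda>_. 1) ?p id" "OPT m n (\<lambda>_. 1) ?p id \<le> (2 + a) ^ m"
    using first_round_OPT_ge_1 first_round_OPT_le assms by simp_all
  moreover have "0 \<le> (1 + a) ^ ((n - 1) div m)"
    using assms(3) by simp
  ultimately have "(1 + a) ^ ((n - 1) div m) / (2 + a) ^ m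
      \<le> makespan n (\<lambda>_. 1) ?p id ?round_robin / OPT m n (\<lambda>_. 1) ?p id"
    by (intro frac_le) linarith+
  also have "\<dots> \<le> PoA m n (\<lambda>_. 1) ?p id"
    using assms by (intro makespan_div_OPT_le_PoA round_robin_is_NE) simp_all
  finally show ?thesis .
qed

lemma powr_div_le_power:
  fixes x :: real
  assumes "1 \<le> x" "0 < m"
  shows "x powr (real n / real m) \<le> x ^ Suc ((n - 1) div m)"
proof -
  have "n \<le> m * Suc ((n - 1) div m)"
    using dividend_less_times_div[OF assms(2), of "n - 1"] by simp
  then have "real n \<le> real m * real (Suc ((n - 1) div m))"
    by (metis of_nat_le_iff of_nat_mult)
  then have "real n / real m \<le> real (Suc ((n - 1) div m))"
    using assms(2) by (simp add: divide_le_eq mult.commute)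
  then have "x powr (real n / real m) \<le> x powr real (Suc ((n - 1) div m))"
    using assms(1) by (intro powr_mono) auto
  also have "\<dots> = x ^ Suc ((n - 1) div m)"
    using assms(1) by (intro powr_realpow) simp
  finally show ?thesis .
qed

theorem theorem10:
  shows "\<forall>m::nat. m \<ge> 2 \<longrightarrow> (\<forall>a::real. a > 0 \<longrightarrow>
    (\<exists>c::real. c > 0 \<and> (\<forall>n::nat. n \<ge> 2 * m + 1 \<longrightarrow>
      (\<exists>(b :: nat \<Rightarrow> real) (pr :: nat \<Rightarrow> nat).
         (\<forall>i<n. b i \<ge> 0) \<and> bij_betw pr {..<n} {..<n} \<and>
         PoA m n (\<lambda>_. 1) (\<lambda>i t. b i + a * t) pr \<ge> c * (1 + a) powr (real n / real m)))))"
proof (intro allI impI)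
  fix m :: nat and a :: real
  assume "m \<ge> 2" "a > 0"
  define c where "c = 1 / ((1 + a) * (2 + a) ^ m)"
  show "\<exists>c>0. \<forall>n\<ge>2 * m + 1. \<exists>b pr. (\<forall>i<n. b i \<ge> 0) \<and> bij_betw pr {..<n} {..<n} \<and>
      PoA m n (\<lambda>_. 1) (\<lambda>i t. b i + a * t) pr \<ge> c * (1 + a) powr (real n / real m)"
  proof (intro exI[of _ c] exI[of _ "first_round_base m"] exI[of _ id] conjI allI impI)
    show "c > 0"
      using \<open>a > 0\<close> by (simp add: c_def)
    fix n :: nat assume "n \<ge> 2 * m + 1"
    have "c * (1 + a) powr (real n / real m) \<le> c * (1 + a) ^ Suc ((n - 1) div m)"
      using powr_div_le_power[of "1 + a" m n] \<open>c > 0\<close> \<open>m \<ge> 2\<close> \<open>a > 0\<close> by (intro mult_left_mono) auto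
    also have "\<dots> = (1 + a) ^ ((n - 1) div m) / (2 + a) ^ m"
      using \<open>a > 0\<close> by (simp add: c_def)
    also have "\<dots> \<le> PoA m n (\<lambda>_. 1) (\<lambda>i t. first_round_base m i + a * t) id"
      using first_round_PoA_ge \<open>m \<ge> 2\<close> \<open>n \<ge> 2 * m + 1\<close> \<open>a > 0\<close> by simp
    finally show "PoA m n (\<lambda>_. 1) (\<lambda>i t. first_round_base m i + a * t) id
        \<ge> c * (1 + a) powr (real n / real m)" .
  qed (simp_all add: first_round_base_def)
qed

end
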